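(* Let $n\ge 4$ and let $L$ be an $n$-bow, i.e. a generic length vector satisfying the strict triangle inequality such that $\{n,i\}$ is long for every $i=1,\dots,n-1$. Then any two vertices of $\Gamma(L)$ are connected by a path in $\Gamma(L)$ of length at most $3$.
   Context: Let $n\ge 4$ and $L=(l_1,\dots,l_n)$ be positive reals with $l_i<\sum_{j\ne i}l_j$ for every $i$ (strict triangle inequality), and generic: there is no $J\subseteq[n]$ with $\sum_{i\in J}l_i=\sum_{i\notin J}l_i$. Here $[n]=\{1,\dots,n\}$ and $|L|=\sum_{i=1}^n l_i$. A set $I\subseteq[n]$ is short if $\sum_{i\in I}l_i<|L|/2$ and long otherwise. A cyclically ordered partition of $[n]$ into $k$ parts is a sequence $(A_1,\dots,A_k)$ of pairwise disjoint nonempty sets with union $[n]$, considered up to cyclic shifts $(A_1,\dots,A_k)\sim(A_2,\dots,A_k,A_1)$; there is no ordering inside a part. It is admissible if every part is short. The graph $\Gamma(L)$ has as vertices the admissible cyclically ordered partitions of $[n]$ into 3 parts, written $(I,J,K)$, and as edges the admissible cyclically ordered partitions into 4 parts $(A,B,C,D)$; such an edge is incident to each of the partitions $(A\cup B,C,D)$, $(A,B\cup C,D)$, $(A,B,C\cup D)$, $(D\cup A,B,C)$ that is admissible. Equivalently, two vertices are adjacent iff one is obtained from the other by moving a nonempty proper subset of one part into another part. The length of a path is its number of edges. *)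

theory Defs
  imports Complex_Main
begin

text \<open>Length vectors are functions L :: nat => real, relevant on the index set {1..n}.\<close>

definition total_len :: "nat \<Rightarrow> (nat \<Rightarrow> real) \<Rightarrow> real" where
  "total_len n L = (\<Sum>i\<in>{1..n}. L i)"

definition short :: "nat \<Rightarrow> (nat \<Rightarrow> real) \<Rightarrow> nat set \<Rightarrow> bool" where
  "short n L I \<longleftrightarrow> (\<Sum>i\<in>I. L i) < total_len n L / 2"

definition long :: "nat \<Rightarrow> (nat \<Rightarrow> real) \<Rightarrow> nat set \<Rightarrow> bool" where
  "long n L I \<longleftrightarrow> \<not> short n L I"

definition length_vector :: "nat \<Rightarrow> (nat \<Rightarrow> real) \<Rightarrow> bool" where
  "length_vector n L \<longleftrightarrow>
     (\<forall>i\<in>{1..n}. 0 < L i) \<and>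
     (\<forall>i\<in>{1..n}. L i < (\<Sum>j\<in>{1..n} - {i}. L j))"

definition generic :: "nat \<Rightarrow> (nat \<Rightarrow> real) \<Rightarrow> bool" where
  "generic n L \<longleftrightarrow>
     (\<forall>J. J \<subseteq> {1..n} \<longrightarrow> (\<Sum>i\<in>J. L i) \<noteq> (\<Sum>i\<in>{1..n} - J. L i))"

definition is_bow :: "nat \<Rightarrow> (nat \<Rightarrow> real) \<Rightarrow> bool" where
  "is_bow n L \<longleftrightarrow> length_vector n L \<and> generic n L \<and>
     (\<forall>i\<in>{1..n-1}. long n L {n, i})"

text \<open>Cyclically ordered partitions into 3 parts, represented by a triple
  (one representative of the cyclic class).\<close>

definition adm3 :: "nat \<Rightarrow> (nat \<Rightarrow> real) \<Rightarrow> nat set \<times> nat set \<times> nat set \<Rightarrow> bool" where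
  "adm3 n L v = (case v of (I, J, K) \<Rightarrow>
      I \<noteq> {} \<and> J \<noteq> {} \<and> K \<noteq> {} \<and>
      I \<inter> J = {} \<and> I \<inter> K = {} \<and> J \<inter> K = {} \<and>
      I \<union> J \<union> K = {1..n} \<and>
      short n L I \<and> short n L J \<and> short n L K)"

definition adm4 :: "nat \<Rightarrow> (nat \<Rightarrow> real) \<Rightarrow> nat set \<Rightarrow> nat set \<Rightarrow> nat set \<Rightarrow> nat set \<Rightarrow> bool" where
  "adm4 n L A B C D \<longleftrightarrow>
      A \<noteq> {} \<and> B \<noteq> {} \<and> C \<noteq> {} \<and> D \<noteq> {} \<and>
      A \<inter> B = {} \<and> A \<inter> C = {} \<and> A \<inter> D = {} \<and>
      B \<inter> C = {} \<and> B \<inter> D = {} \<and> C \<inter> D = {} \<and>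
      A \<union> B \<union> C \<union> D = {1..n} \<and>
      short n L A \<and> short n L B \<and> short n L C \<and> short n L D"

definition cyc_eq :: "nat set \<times> nat set \<times> nat set \<Rightarrow> nat set \<times> nat set \<times> nat set \<Rightarrow> bool" where
  "cyc_eq v w = (case w of (I, J, K) \<Rightarrow> v = (I, J, K) \<or> v = (J, K, I) \<or> v = (K, I, J))"

text \<open>The vertex v is incident to the edge (A,B,C,D): it is (up to cyclic shift)
  one of the four merges of cyclically adjacent parts.\<close>
definition incident :: "nat set \<times> nat set \<times> nat set \<Rightarrow> nat set \<Rightarrow> nat set \<Rightarrow> nat set \<Rightarrow> nat set \<Rightarrow> bool" where
  "incident v A B C D \<longleftrightarrow>
     cyc_eq v (A \<union> B, C, D) \<or> cyc_eq v (A, B \<union> C, D) \<or>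
     cyc_eq v (A, B, C \<union> D) \<or> cyc_eq v (D \<union> A, B, C)"

definition gamma_adj :: "nat \<Rightarrow> (nat \<Rightarrow> real) \<Rightarrow> nat set \<times> nat set \<times> nat set \<Rightarrow> nat set \<times> nat set \<times> nat set \<Rightarrow> bool" where
  "gamma_adj n L v w \<longleftrightarrow> adm3 n L v \<and> adm3 n L w \<and> \<not> cyc_eq v w \<and>
     (\<exists>A B C D. adm4 n L A B C D \<and> incident v A B C D \<and> incident w A B C D)"

definition gamma_path_le :: "nat \<Rightarrow> (nat \<Rightarrow> real) \<Rightarrow> nat \<Rightarrow> nat set \<times> nat set \<times> nat set \<Rightarrow> nat set \<times> nat set \<times> nat set \<Rightarrow> bool" where
  "gamma_path_le n L k v w \<longleftrightarrow>
     (\<exists>ps. ps \<noteq> [] \<and> hd ps = v \<and> last ps = w \<and> length ps \<le> k + 1 \<and>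
        (\<forall>p\<in>set ps. adm3 n L p) \<and>
        (\<forall>i. i + 1 < length ps \<longrightarrow> gamma_adj n L (ps ! i) (ps ! (i + 1))))"

end

theory Submission
  imports Defs
begin

text \<open>Since every pair \<open>{n, i}\<close> is long, \<open>n\<close> forms a part of its own in every admissible
  partition, while every proper subset of \<open>M = {1..n-1}\<close> is short (its complement contains \<open>n\<close>
  and some \<open>i\<close>). Hence the vertices of \<open>\<Gamma>(L)\<close> are exactly the cyclic classes of
  \<open>({n}, J, M - J)\<close> with \<open>{} \<noteq> J \<subset> M\<close>, and for \<open>J \<subset> K\<close> the 4-partition \<open>({n}, J, K - J, M - K)\<close>
  joins the classes of \<open>J\<close> and \<open>K\<close>. So \<open>\<Gamma>(L)\<close> contains the strict comparability graph of the
  nonempty proper subsets of \<open>M\<close>, and that graph has diameter at most 3 once \<open>|M| \<ge> 3\<close>.\<close>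

definition nontrivial_subset :: "'a set \<Rightarrow> 'a set \<Rightarrow> bool" where
  "nontrivial_subset M J \<longleftrightarrow> J \<noteq> {} \<and> J \<subset> M"

definition strict_comparable :: "'a set \<Rightarrow> 'a set \<Rightarrow> bool" where
  "strict_comparable J K \<longleftrightarrow> J \<subset> K \<or> K \<subset> J"

lemma strict_comparable_sym: "strict_comparable J K \<Longrightarrow> strict_comparable K J"
  unfolding strict_comparable_def by blast

lemma card_ge_3_obtain:
  assumes "3 \<le> card M" "x \<in> M"
  obtains y z where "y \<in> M" "z \<in> M" "x \<noteq> y" "x \<noteq> z" "y \<noteq> z"
proof -
  have "\<not> M \<subseteq> {x, y}" for y
    using card_mono[of "{x, y}" M] card_insert_le_m1[of 2 "{y}" x] assms(1) by fastforce
  then obtain y where "y \<in> M" "y \<noteq> x" by blast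
  moreover obtain z where "z \<in> M" "z \<notin> {x, y}" using \<open>\<not> M \<subseteq> {x, y}\<close> by blast
  ultimately show thesis using that by blast
qed

lemma nontrivial_subset_strict_comparable_exists:
  assumes "3 \<le> card M" "nontrivial_subset M J"
  obtains K where "nontrivial_subset M K" "strict_comparable J K"
proof (cases "\<exists>x. J = {x}")
  case True
  then obtain x where x: "J = {x}" by blast
  with assms(2) have "x \<in> M" unfolding nontrivial_subset_def by blast
  then obtain y z where "y \<in> M" "z \<in> M" "x \<noteq> y" "x \<noteq> z" "y \<noteq> z"
    using card_ge_3_obtain[OF assms(1)] by blast
  then have "nontrivial_subset M {x, y}" "strict_comparable J {x, y}"
    unfolding nontrivial_subset_def strict_comparable_def x using \<open>x \<in> M\<close> by blast+
  then show thesis using that by blast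
next
  case False
  with assms(2) obtain x where "x \<in> J" "J \<noteq> {x}" unfolding nontrivial_subset_def by blast
  then have "nontrivial_subset M {x}" "strict_comparable J {x}"
    using assms(2) unfolding nontrivial_subset_def strict_comparable_def by blast+
  then show thesis using that by blast
qed

lemma nontrivial_subset_partition:
  assumes "{a} \<union> J \<union> K = U" "a \<notin> J" "a \<notin> K" "J \<inter> K = {}" "J \<noteq> {}" "K \<noteq> {}"
  shows "nontrivial_subset (U - {a}) J" "K = U - {a} - J"
  using assms unfolding nontrivial_subset_def by blast+

text \<open>The hard case of the walk: \<open>J2\<close> is the complement of \<open>J1\<close>. Removing a point
  \<open>y\<close> of \<open>J2\<close> from \<open>M\<close> gives a set above \<open>J1\<close>, which lies above any other point \<open>y'\<close> of \<open>J2\<close>.\<close>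

lemma complementary_walk:
  assumes "J1 \<noteq> {}" "J1 \<inter> J2 = {}" "J1 \<union> J2 = M" "y \<in> J2" "y' \<in> J2" "y \<noteq> y'"
  shows "nontrivial_subset M (M - {y})" "nontrivial_subset M {y'}"
    "strict_comparable J1 (M - {y})" "strict_comparable (M - {y}) {y'}"
    "strict_comparable {y'} J2"
proof -
  obtain x where "x \<in> J1" using assms(1) by blast
  then have "x \<in> M - {y}" "x \<noteq> y'" "y \<in> M" "y' \<in> M" "y \<notin> J1" "y' \<notin> J1"
    using assms(2-6) by blast+
  then show "nontrivial_subset M (M - {y})" "nontrivial_subset M {y'}"
    "strict_comparable J1 (M - {y})" "strict_comparable (M - {y}) {y'}"
    "strict_comparable {y'} J2"
    using assms unfolding nontrivial_subset_def strict_comparable_def by auto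
qed

lemma nontrivial_subsets_walk:
  assumes "3 \<le> card M" "nontrivial_subset M J1" "nontrivial_subset M J2"
  obtains K1 K2 where "nontrivial_subset M K1" "nontrivial_subset M K2"
    "strict_comparable J1 K1" "strict_comparable K1 K2" "K2 = J2 \<or> strict_comparable K2 J2"
proof -
  have J: "J1 \<noteq> {}" "J1 \<subset> M" "J2 \<noteq> {}" "J2 \<subset> M"
    using assms(2,3) unfolding nontrivial_subset_def by blast+
  consider "J1 = J2" | "strict_comparable J1 J2" | "\<not> J1 \<subseteq> J2" "\<not> J2 \<subseteq> J1" "J1 \<inter> J2 \<noteq> {}"
    | "J1 \<inter> J2 = {}" "J1 \<union> J2 \<noteq> M" | "J1 \<inter> J2 = {}" "J1 \<union> J2 = M"
    unfolding strict_comparable_def by blast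
  then show thesis
  proof cases
    case 1
    obtain K where K: "nontrivial_subset M K" "strict_comparable J1 K"
      using nontrivial_subset_strict_comparable_exists[OF assms(1,2)] .
    show thesis using that[OF K(1) assms(2) K(2) strict_comparable_sym[OF K(2)]] 1 by simp
  next
    case 2
    then show thesis using that[OF assms(3,2) 2 strict_comparable_sym[OF 2]] by simp
  next
    case 3
    then have "nontrivial_subset M (J1 \<inter> J2)" "strict_comparable J1 (J1 \<inter> J2)"
      "strict_comparable (J1 \<inter> J2) J2"
      using J unfolding nontrivial_subset_def strict_comparable_def by blast+
    then show thesis using that[OF _ assms(3)] by simp
  next
    case 4
    then have "nontrivial_subset M (J1 \<union> J2)" "strict_comparable J1 (J1 \<union> J2)"
      "strict_comparable (J1 \<union> J2) J2"
      using J unfolding nontrivial_subset_def strict_comparable_def by blast+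
    then show thesis using that[OF _ assms(3)] by simp
  next
    case 5
    obtain x where "x \<in> J1" using J by blast
    then obtain y z where "y \<in> M" "z \<in> M" "x \<noteq> y" "x \<noteq> z" "y \<noteq> z"
      using card_ge_3_obtain[OF assms(1)] J by blast
    then consider "y \<in> J2" "z \<in> J2" | "x \<in> J1" "y \<in> J1" | "x \<in> J1" "z \<in> J1"
      using 5 \<open>x \<in> J1\<close> by blast
    then obtain a b where "a \<noteq> b" "a \<in> J2 \<and> b \<in> J2 \<or> a \<in> J1 \<and> b \<in> J1"
      using \<open>x \<noteq> y\<close> \<open>x \<noteq> z\<close> \<open>y \<noteq> z\<close> by metis
    then show thesis
    proof (elim disjE conjE)
      assume "a \<in> J2" "b \<in> J2"
      note walk = complementary_walk[OF J(1) 5 this \<open>a \<noteq> b\<close>]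
      show thesis using that[OF walk(1,2,3,4)] walk(5) by simp
    next
      assume "a \<in> J1" "b \<in> J1"
      have "J2 \<inter> J1 = {}" "J2 \<union> J1 = M" using 5 by blast+
      note walk = complementary_walk[OF J(3) this \<open>a \<in> J1\<close> \<open>b \<in> J1\<close> \<open>a \<noteq> b\<close>]
      show thesis using that[OF walk(2,1) strict_comparable_sym[OF walk(5)]
          strict_comparable_sym[OF walk(4)]] strict_comparable_sym[OF walk(3)] by simp
    qed
  qed
qed

lemma cyc_eq_refl: "cyc_eq v v"
  unfolding cyc_eq_def by (cases v) auto

lemma cyc_eq_sym: "cyc_eq v u \<Longrightarrow> cyc_eq u v"
  unfolding cyc_eq_def by (cases v; cases u) auto

lemma cyc_eq_trans: "cyc_eq v u \<Longrightarrow> cyc_eq u x \<Longrightarrow> cyc_eq v x"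
  unfolding cyc_eq_def by (cases v; cases u; cases x) auto

lemma gamma_adj_sym:
  assumes "gamma_adj n L v w"
  shows "gamma_adj n L w v"
proof -
  obtain A B C D where "adm4 n L A B C D" "incident v A B C D" "incident w A B C D"
    using assms unfolding gamma_adj_def by blast
  moreover have "\<not> cyc_eq w v" using assms cyc_eq_sym unfolding gamma_adj_def by blast
  ultimately show ?thesis using assms unfolding gamma_adj_def by blast
qed

lemma incident_cyc_eq: "cyc_eq v v' \<Longrightarrow> incident v' A B C D \<Longrightarrow> incident v A B C D"
  unfolding incident_def using cyc_eq_trans by blast

lemma gamma_adj_cyc_eq:
  assumes "cyc_eq v v'" "cyc_eq w w'" "adm3 n L v" "adm3 n L w" "gamma_adj n L v' w'"
  shows "gamma_adj n L v w"
proof -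
  obtain A B C D where "adm4 n L A B C D" "incident v' A B C D" "incident w' A B C D"
    using assms(5) unfolding gamma_adj_def by blast
  then have "adm4 n L A B C D" "incident v A B C D" "incident w A B C D"
    using incident_cyc_eq assms(1,2) by blast+
  moreover have "\<not> cyc_eq v w"
  proof
    assume "cyc_eq v w"
    then have "cyc_eq v' w'"
      using cyc_eq_trans[OF cyc_eq_trans[OF cyc_eq_sym[OF assms(1)]] assms(2)] by blast
    then show False using assms(5) unfolding gamma_adj_def by blast
  qed
  ultimately show ?thesis using assms(3,4) unfolding gamma_adj_def by blast
qed

lemma gamma_path_le_refl: "adm3 n L v \<Longrightarrow> gamma_path_le n L 0 v v"
  unfolding gamma_path_le_def by (intro exI[of _ "[v]"]) simp

lemma gamma_path_le_Cons:
  assumes "gamma_adj n L u v" "gamma_path_le n L k v w"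
  shows "gamma_path_le n L (Suc k) u w"
proof -
  obtain ps where ps: "ps \<noteq> []" "hd ps = v" "last ps = w" "length ps \<le> k + 1"
    "\<forall>p\<in>set ps. adm3 n L p" "\<forall>i. i + 1 < length ps \<longrightarrow> gamma_adj n L (ps ! i) (ps ! (i + 1))"
    using assms(2) unfolding gamma_path_le_def by blast
  have "gamma_adj n L ((u # ps) ! i) ((u # ps) ! (i + 1))" if "i + 1 < length (u # ps)" for i
    using that assms(1) ps(1,2,6) by (cases i) (auto simp: hd_conv_nth)
  moreover have "adm3 n L u" using assms(1) unfolding gamma_adj_def by blast
  ultimately show ?thesis
    unfolding gamma_path_le_def using ps(1-5) by (intro exI[of _ "u # ps"]) auto
qed

lemma gamma_path_le_mono:
  assumes "gamma_path_le n L k v w" "k \<le> k'"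
  shows "gamma_path_le n L k' v w"
proof -
  have "length ps \<le> k + 1 \<Longrightarrow> length ps \<le> k' + 1" for ps :: "'a list"
    using assms(2) by linarith
  then show ?thesis using assms(1) unfolding gamma_path_le_def by blast
qed

lemma is_bow_sum_ge_half:
  assumes "is_bow n L" "i \<in> {1..n-1}" "{n, i} \<subseteq> X" "X \<subseteq> {1..n}"
  shows "total_len n L / 2 \<le> sum L X"
proof -
  have "0 \<le> L j" if "j \<in> X" for j
    using assms(1,4) that unfolding is_bow_def length_vector_def by (auto intro: less_imp_le)
  then have "sum L {n, i} \<le> sum L X"
    using assms(3,4) by (intro sum_mono2) (auto intro: finite_subset)
  moreover have "long n L {n, i}" using assms(1,2) unfolding is_bow_def by blast
  ultimately show ?thesis unfolding long_def short_def by linarith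
qed

lemma is_bow_short_subset:
  assumes "is_bow n L" "S \<subset> {1..n-1}"
  shows "short n L S"
proof -
  obtain i where i: "i \<in> {1..n-1}" "i \<notin> S" using assms(2) by blast
  have "{1..n-1} \<subseteq> {1..n}" "n \<notin> {1..n-1}" by auto
  then have S: "S \<subseteq> {1..n}" and "n \<notin> S" using assms(2) by blast+
  then have "{n, i} \<subseteq> {1..n} - S" using i by auto
  then have "total_len n L / 2 \<le> sum L ({1..n} - S)"
    using is_bow_sum_ge_half[OF assms(1) i(1)] by blast
  moreover have "sum L S + sum L ({1..n} - S) = total_len n L"
    using sum.subset_diff[OF S, of L] unfolding total_len_def by simp
  moreover have "sum L S \<noteq> sum L ({1..n} - S)"
    using assms(1) S unfolding is_bow_def generic_def by blast
  ultimately show ?thesis unfolding short_def by linarith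
qed

lemma is_bow_short_singleton:
  assumes "is_bow n L" "1 \<le> n"
  shows "short n L {n}"
proof -
  have "L n < sum L ({1..n} - {n})"
    using assms unfolding is_bow_def length_vector_def by auto
  moreover have "sum L {1..n} = L n + sum L ({1..n} - {n})"
    using assms(2) by (subst sum.remove[of _ n]) auto
  ultimately show ?thesis unfolding short_def total_len_def by simp
qed

lemma is_bow_short_containing_last:
  assumes "is_bow n L" "X \<subseteq> {1..n}" "n \<in> X" "short n L X"
  shows "X = {n}"
proof (rule ccontr)
  assume "X \<noteq> {n}"
  then obtain i where "i \<in> X" "i \<noteq> n" using assms(3) by blast
  moreover have "i \<in> {1..n}" using \<open>i \<in> X\<close> assms(2) by blast
  ultimately have "i \<in> {1..n-1}" by auto
  then have "total_len n L / 2 \<le> sum L X"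
    using is_bow_sum_ge_half[OF assms(1)] \<open>i \<in> X\<close> assms(2,3) by blast
  then show False using assms(4) unfolding short_def by simp
qed

definition bow_vertex :: "nat \<Rightarrow> nat set \<Rightarrow> nat set \<times> nat set \<times> nat set" where
  "bow_vertex n J = ({n}, J, {1..n-1} - J)"

lemma adm3_bow_vertex:
  assumes "is_bow n L" "nontrivial_subset {1..n-1} J"
  shows "adm3 n L (bow_vertex n J)"
proof -
  have "1 \<le> n" "{n} \<union> {1..n-1} = {1..n}" using assms(2) unfolding nontrivial_subset_def by auto
  moreover have "J \<subset> {1..n-1}" "{1..n-1} - J \<subset> {1..n-1}"
    using assms(2) unfolding nontrivial_subset_def by auto
  ultimately show ?thesis
    using assms(2) is_bow_short_subset[OF assms(1)] is_bow_short_singleton[OF assms(1)]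
    unfolding adm3_def bow_vertex_def nontrivial_subset_def by auto
qed

lemma adm3_bow_cases:
  assumes "is_bow n L" "adm3 n L v"
  obtains J where "nontrivial_subset {1..n-1} J" "cyc_eq v (bow_vertex n J)"
proof -
  obtain I J K where v: "v = (I, J, K)" by (cases v)
  have parts: "I \<union> J \<union> K = {1..n}" "I \<inter> J = {}" "I \<inter> K = {}" "J \<inter> K = {}"
    "I \<noteq> {}" "J \<noteq> {}" "K \<noteq> {}" and short: "short n L I" "short n L J" "short n L K"
    using assms(2) unfolding v adm3_def by simp_all
  have singleton: "X = {n}" if "X \<subseteq> {1..n}" "short n L X" "n \<in> X" for X
    using is_bow_short_containing_last[OF assms(1) that(1,3,2)] .
  have "n \<in> I \<union> J \<union> K" using parts(1,5) by auto
  then consider "I = {n}" | "J = {n}" | "K = {n}"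
    using singleton parts(1) short by blast
  moreover have M: "{1..n} - {n} = {1..n-1}" by auto
  ultimately obtain J' where "nontrivial_subset {1..n-1} J'"
    "v = ({n}, J', {1..n-1} - J') \<or> v = ({1..n-1} - J', {n}, J') \<or> v = (J', {1..n-1} - J', {n})"
  proof cases
    case 1
    then have "{n} \<union> J \<union> K = {1..n}" "n \<notin> J" "n \<notin> K" using parts by blast+
    from nontrivial_subset_partition[OF this parts(4,6,7)] show thesis
      using that[of J] 1 unfolding v M by blast
  next
    case 2
    then have "{n} \<union> K \<union> I = {1..n}" "n \<notin> K" "n \<notin> I" "K \<inter> I = {}" using parts by blast+
    from nontrivial_subset_partition[OF this parts(7,5)] show thesis
      using that[of K] 2 unfolding v M by blast
  next
    case 3
    then have "{n} \<union> I \<union> J = {1..n}" "n \<notin> I" "n \<notin> J" using parts by blast+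
    from nontrivial_subset_partition[OF this parts(2,5,6)] show thesis
      using that[of I] 3 unfolding v M by blast
  qed
  then show thesis using that unfolding cyc_eq_def bow_vertex_def by auto
qed

lemma gamma_adj_bow_vertex_subset:
  assumes "is_bow n L" "nontrivial_subset {1..n-1} J" "nontrivial_subset {1..n-1} K" "J \<subset> K"
  shows "gamma_adj n L (bow_vertex n J) (bow_vertex n K)"
proof -
  let ?M = "{1..n-1}"
  have JK: "J \<noteq> {}" "J \<subset> K" "K \<subset> ?M" using assms(2-4) unfolding nontrivial_subset_def by blast+
  have "1 \<le> n" "{n} \<union> ?M = {1..n}" "n \<notin> ?M" using JK(1,2,3) by auto
  have "J \<subset> ?M" "K - J \<subset> ?M" "?M - K \<subset> ?M" using JK by blast+
  then have "short n L {n}" "short n L J" "short n L (K - J)" "short n L (?M - K)"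
    using is_bow_short_subset[OF assms(1)] is_bow_short_singleton[OF assms(1) \<open>1 \<le> n\<close>] by blast+
  moreover have "{n} \<union> J \<union> (K - J) \<union> (?M - K) = {1..n}"
    using \<open>{n} \<union> ?M = {1..n}\<close> JK by blast
  moreover have "K - J \<noteq> {}" "?M - K \<noteq> {}" "n \<notin> J" "n \<notin> K"
    using JK \<open>n \<notin> ?M\<close> by blast+
  ultimately have "adm4 n L {n} J (K - J) (?M - K)"
    unfolding adm4_def using JK(1,2) \<open>n \<notin> ?M\<close> by auto
  moreover have "K - J \<union> (?M - K) = ?M - J" "J \<union> (K - J) = K" using JK by blast+
  then have "incident (bow_vertex n J) {n} J (K - J) (?M - K)"
    "incident (bow_vertex n K) {n} J (K - J) (?M - K)"
    unfolding incident_def cyc_eq_def bow_vertex_def by simp_all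
  moreover have "\<not> cyc_eq (bow_vertex n J) (bow_vertex n K)"
    using JK(2) \<open>n \<notin> J\<close> \<open>n \<notin> K\<close> unfolding cyc_eq_def bow_vertex_def by auto
  ultimately show ?thesis
    using adm3_bow_vertex[OF assms(1)] assms(2,3) unfolding gamma_adj_def by blast
qed

lemma gamma_adj_bow_vertex:
  assumes "is_bow n L" "nontrivial_subset {1..n-1} J" "nontrivial_subset {1..n-1} K"
    "strict_comparable J K" "cyc_eq v (bow_vertex n J)" "cyc_eq w (bow_vertex n K)"
    "adm3 n L v" "adm3 n L w"
  shows "gamma_adj n L v w"
proof -
  have "gamma_adj n L (bow_vertex n J) (bow_vertex n K)"
  proof (cases "J \<subset> K")
    case True
    then show ?thesis using gamma_adj_bow_vertex_subset[OF assms(1-3)] by blast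
  next
    case False
    then have "K \<subset> J" using assms(4) unfolding strict_comparable_def by blast
    then show ?thesis using gamma_adj_sym gamma_adj_bow_vertex_subset[OF assms(1,3,2)] by blast
  qed
  then show ?thesis using gamma_adj_cyc_eq[OF assms(5-8)] by blast
qed

lemma gamma_path_le_2_bow_vertex:
  assumes "is_bow n L" "nontrivial_subset {1..n-1} K1" "nontrivial_subset {1..n-1} K2"
    "nontrivial_subset {1..n-1} J" "strict_comparable K1 K2" "K2 = J \<or> strict_comparable K2 J"
    "cyc_eq w (bow_vertex n J)" "adm3 n L w"
  shows "gamma_path_le n L 2 (bow_vertex n K1) w"
proof -
  have P: "adm3 n L (bow_vertex n K1)" "adm3 n L (bow_vertex n K2)"
    using adm3_bow_vertex[OF assms(1)] assms(2,3) by blast+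
  note adj = gamma_adj_bow_vertex[OF assms(1)]
  show ?thesis
  proof (cases "K2 = J")
    case True
    have "gamma_adj n L (bow_vertex n K1) w"
      using adj[OF assms(2,4) assms(5)[unfolded True] cyc_eq_refl assms(7) P(1) assms(8)] .
    then have "gamma_path_le n L 1 (bow_vertex n K1) w"
      using gamma_path_le_Cons[OF _ gamma_path_le_refl[OF assms(8)]] by simp
    then show ?thesis using gamma_path_le_mono by simp
  next
    case False
    then have "gamma_adj n L (bow_vertex n K2) w"
      using adj[OF assms(3,4) _ cyc_eq_refl assms(7) P(2) assms(8)] assms(6) by blast
    moreover have "gamma_adj n L (bow_vertex n K1) (bow_vertex n K2)"
      using adj[OF assms(2,3,5) cyc_eq_refl cyc_eq_refl P] .
    ultimately have "gamma_path_le n L (Suc (Suc 0)) (bow_vertex n K1) w"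
      using gamma_path_le_Cons gamma_path_le_refl[OF assms(8)] by blast
    then show ?thesis by (simp add: numeral_2_eq_2)
  qed
qed

theorem mainTheorem4:
  fixes n :: nat and L :: "nat \<Rightarrow> real"
    and v w :: "nat set \<times> nat set \<times> nat set"
  assumes "n \<ge> 4"
    and "is_bow n L"
    and "adm3 n L v" and "adm3 n L w"
  shows "gamma_path_le n L 3 v w"
proof -
  obtain J1 where J1: "nontrivial_subset {1..n-1} J1" "cyc_eq v (bow_vertex n J1)"
    using adm3_bow_cases[OF assms(2,3)] .
  obtain J2 where J2: "nontrivial_subset {1..n-1} J2" "cyc_eq w (bow_vertex n J2)"
    using adm3_bow_cases[OF assms(2,4)] .
  have "3 \<le> card {1..n-1}" using assms(1) by simp
  then obtain K1 K2 where K: "nontrivial_subset {1..n-1} K1" "nontrivial_subset {1..n-1} K2"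
    "strict_comparable J1 K1" "strict_comparable K1 K2" "K2 = J2 \<or> strict_comparable K2 J2"
    using nontrivial_subsets_walk J1(1) J2(1) by blast
  have "adm3 n L (bow_vertex n K1)" using adm3_bow_vertex[OF assms(2) K(1)] .
  then have "gamma_adj n L v (bow_vertex n K1)"
    using gamma_adj_bow_vertex[OF assms(2) J1(1) K(1,3) J1(2) cyc_eq_refl assms(3)] by blast
  moreover have "gamma_path_le n L 2 (bow_vertex n K1) w"
    using gamma_path_le_2_bow_vertex[OF assms(2) K(1,2) J2(1) K(4,5) J2(2) assms(4)] .
  ultimately have "gamma_path_le n L (Suc 2) v w" by (rule gamma_path_le_Cons)
  then show ?thesis by (simp add: numeral_3_eq_3)
qed

end
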